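(* For all $n\ge 0$, the distribution of the quadruple $(\operatorname{asc},\operatorname{des},\operatorname{MNA},\operatorname{MND})$ on $S_n(231,312)$ equals the distribution of $(\operatorname{des},\operatorname{asc},\operatorname{MND},\operatorname{MNA})$ on $S_n(213,231)$, i.e. $$\sum_{\pi\in S_n(231,312)} t_1^{\operatorname{asc}(\pi)}t_2^{\operatorname{des}(\pi)}t_3^{\operatorname{MNA}(\pi)}t_4^{\operatorname{MND}(\pi)}=\sum_{\sigma\in S_n(213,231)} t_1^{\operatorname{des}(\sigma)}t_2^{\operatorname{asc}(\sigma)}t_3^{\operatorname{MND}(\sigma)}t_4^{\operatorname{MNA}(\sigma)}.$$
   Context: For $n\ge 0$, $S_n$ denotes the set of permutations $\pi=\pi_1\cdots\pi_n$ of $[n]=\{1,\dots,n\}$. $\pi$ avoids a pattern $\tau\in S_k$ if no subsequence $\pi_{i_1}\cdots\pi_{i_k}$ ($i_1<\dots<i_k$) satisfies $\pi_{i_a}<\pi_{i_b}\iff\tau_a<\tau_b$; $S_n(\tau,\rho)$ is the set of permutations in $S_n$ avoiding both $\tau$ and $\rho$. $\operatorname{asc}(\pi)$ (resp. $\operatorname{des}(\pi)$) is the number of $i\in[n-1]$ with $\pi_i<\pi_{i+1}$ (resp. $\pi_i>\pi_{i+1}$). $\operatorname{MNA}(\pi)$ is the maximum size of a set $I\subseteq[n-1]$ such that $\pi_i<\pi_{i+1}$ for all $i\in I$ and $|i-j|\ge 2$ for distinct $i,j\in I$; $\operatorname{MND}(\pi)$ is defined analogously with $\pi_i>\pi_{i+1}$.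 *)

theory Defs
  imports Main
begin

(* Permutations of [n] are represented as lists \<pi> = [\<pi>_1,...,\<pi>_n] (0-indexed positions). *)
definition perms :: "nat \<Rightarrow> nat list set" where
  "perms n = {xs. distinct xs \<and> set xs = {1..n}}"

definition contains :: "nat list \<Rightarrow> nat list \<Rightarrow> bool" where
  "contains \<pi> \<tau> \<longleftrightarrow> (\<exists>idx :: nat \<Rightarrow> nat.
      strict_mono_on {..<length \<tau>} idx \<and> (\<forall>a<length \<tau>. idx a < length \<pi>) \<and>
      (\<forall>a<length \<tau>. \<forall>b<length \<tau>. \<pi> ! idx a < \<pi> ! idx b \<longleftrightarrow> \<tau> ! a < \<tau> ! b))"

definition avoids :: "nat list \<Rightarrow> nat list \<Rightarrow> bool" where
  "avoids \<pi> \<tau> \<longleftrightarrow> \<not> contains \<pi> \<tau>"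

definition Av2 :: "nat \<Rightarrow> nat list \<Rightarrow> nat list \<Rightarrow> nat list set" where
  "Av2 n \<tau> \<rho> = {\<pi> \<in> perms n. avoids \<pi> \<tau> \<and> avoids \<pi> \<rho>}"

definition asc_set :: "nat list \<Rightarrow> nat set" where
  "asc_set \<pi> = {i. i + 1 < length \<pi> \<and> \<pi> ! i < \<pi> ! (i+1)}"

definition des_set :: "nat list \<Rightarrow> nat set" where
  "des_set \<pi> = {i. i + 1 < length \<pi> \<and> \<pi> ! i > \<pi> ! (i+1)}"

definition asc :: "nat list \<Rightarrow> nat" where "asc \<pi> = card (asc_set \<pi>)"
definition des :: "nat list \<Rightarrow> nat" where "des \<pi> = card (des_set \<pi>)"

definition nonadjacent :: "nat set \<Rightarrow> bool" where
  "nonadjacent I \<longleftrightarrow> (\<forall>i\<in>I. \<forall>j\<in>I. i \<noteq> j \<longrightarrow> i + 2 \<le> j \<or> j + 2 \<le> i)"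

definition MNA :: "nat list \<Rightarrow> nat" where
  "MNA \<pi> = Max (card ` {I. I \<subseteq> asc_set \<pi> \<and> nonadjacent I})"

definition MND :: "nat list \<Rightarrow> nat" where
  "MND \<pi> = Max (card ` {I. I \<subseteq> des_set \<pi> \<and> nonadjacent I})"

end

theory Submission
  imports Defs
begin

(* Both classes are in bijection with the binary words of length n - 1 via the ascent word of a
   permutation.  In a permutation avoiding 231 and 312 the entries below the first entry form the
   descending run that starts it, so the first entry is fixed by the number of leading descents; a
   permutation avoiding 213 and 231 starts with its minimum or its maximum according to whether it
   starts with an ascent or a descent.  Either way a permutation is recovered from its ascent word by
   peeling off first entries, and every word is realized.  The four statistics only depend on the
   ascent word (asc and MNA on its ascent positions, des and MND on its descent positions), so both
   sums become the same sum over all words, the second one after complementing the words. *)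

section \<open>Patterns of length three\<close>

definition triple_free :: "(nat \<Rightarrow> nat \<Rightarrow> nat \<Rightarrow> bool) \<Rightarrow> nat list \<Rightarrow> bool" where
  "triple_free P xs \<longleftrightarrow> (\<forall>i j k. i < j \<longrightarrow> j < k \<longrightarrow> k < length xs \<longrightarrow> \<not> P (xs!i) (xs!j) (xs!k))"

definition pat231 :: "nat \<Rightarrow> nat \<Rightarrow> nat \<Rightarrow> bool" where "pat231 p q r \<longleftrightarrow> r < p \<and> p < q"
definition pat312 :: "nat \<Rightarrow> nat \<Rightarrow> nat \<Rightarrow> bool" where "pat312 p q r \<longleftrightarrow> q < r \<and> r < p"
definition pat213 :: "nat \<Rightarrow> nat \<Rightarrow> nat \<Rightarrow> bool" where "pat213 p q r \<longleftrightarrow> q < p \<and> p < r"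

lemma contains_length3_iff:
  "contains \<pi> [a, b, c] \<longleftrightarrow> (\<exists>i j k. i < j \<and> j < k \<and> k < length \<pi> \<and>
     (\<pi>!i < \<pi>!j \<longleftrightarrow> a < b) \<and> (\<pi>!j < \<pi>!i \<longleftrightarrow> b < a) \<and> (\<pi>!i < \<pi>!k \<longleftrightarrow> a < c) \<and>
     (\<pi>!k < \<pi>!i \<longleftrightarrow> c < a) \<and> (\<pi>!j < \<pi>!k \<longleftrightarrow> b < c) \<and> (\<pi>!k < \<pi>!j \<longleftrightarrow> c < b))"
  (is "?L \<longleftrightarrow> ?R")
proof
  assume ?L
  then obtain idx :: "nat \<Rightarrow> nat" where mono: "strict_mono_on {..<length [a,b,c]} idx"
    and bound: "\<forall>u<length [a,b,c]. idx u < length \<pi>"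
    and iso: "\<forall>u<length [a,b,c]. \<forall>v<length [a,b,c]. \<pi> ! idx u < \<pi> ! idx v \<longleftrightarrow> [a,b,c] ! u < [a,b,c] ! v"
    unfolding contains_def by blast
  have "idx 0 < idx 1" "idx 1 < idx 2" using mono by (auto simp: strict_mono_on_def)
  moreover have "idx 2 < length \<pi>" using bound by simp
  ultimately show ?R
    using iso[rule_format, of 0 1] iso[rule_format, of 1 0] iso[rule_format, of 0 2]
      iso[rule_format, of 2 0] iso[rule_format, of 1 2] iso[rule_format, of 2 1]
    by (intro exI[of _ "idx 0"] exI[of _ "idx 1"] exI[of _ "idx 2"]) simp
next
  assume ?R
  then obtain i j k where ijk: "i < j" "j < k" "k < length \<pi>" and
    cmp: "\<pi>!i < \<pi>!j \<longleftrightarrow> a < b" "\<pi>!j < \<pi>!i \<longleftrightarrow> b < a" "\<pi>!i < \<pi>!k \<longleftrightarrow> a < c"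
    "\<pi>!k < \<pi>!i \<longleftrightarrow> c < a" "\<pi>!j < \<pi>!k \<longleftrightarrow> b < c" "\<pi>!k < \<pi>!j \<longleftrightarrow> c < b"
    by blast
  define idx where "idx = (\<lambda>u::nat. if u = 0 then i else if u = 1 then j else k)"
  have less_3: "u < 3 \<longleftrightarrow> u = 0 \<or> u = 1 \<or> u = 2" for u :: nat by auto
  have "strict_mono_on {..<length [a,b,c]} idx"
    using ijk by (auto simp: strict_mono_on_def idx_def less_3)
  moreover have "\<forall>u<length [a,b,c]. idx u < length \<pi>"
    using ijk by (auto simp: idx_def less_3)
  moreover have "\<forall>u<length [a,b,c]. \<forall>v<length [a,b,c]. \<pi> ! idx u < \<pi> ! idx v \<longleftrightarrow> [a,b,c] ! u < [a,b,c] ! v"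
    using cmp by (auto simp: idx_def less_3)
  ultimately show ?L unfolding contains_def by blast
qed

lemma triple_free_iff_not_ex:
  "triple_free P xs \<longleftrightarrow> \<not> (\<exists>i j k. i < j \<and> j < k \<and> k < length xs \<and> P (xs!i) (xs!j) (xs!k))"
  by (auto simp: triple_free_def)

lemma avoids_231: "avoids \<pi> [2,3,1] \<longleftrightarrow> triple_free pat231 \<pi>"
  unfolding avoids_def contains_length3_iff triple_free_iff_not_ex pat231_def
  by (intro arg_cong[where f = Not] ex_cong1) auto

lemma avoids_312: "avoids \<pi> [3,1,2] \<longleftrightarrow> triple_free pat312 \<pi>"
  unfolding avoids_def contains_length3_iff triple_free_iff_not_ex pat312_def
  by (intro arg_cong[where f = Not] ex_cong1) auto

lemma avoids_213: "avoids \<pi> [2,1,3] \<longleftrightarrow> triple_free pat213 \<pi>"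
  unfolding avoids_def contains_length3_iff triple_free_iff_not_ex pat213_def
  by (intro arg_cong[where f = Not] ex_cong1) auto

lemma triple_free_Nil [simp]: "triple_free P []"
  by (simp add: triple_free_def)

lemma triple_free_Cons:
  "triple_free P (x # xs) \<longleftrightarrow>
     triple_free P xs \<and> (\<forall>j k. j < k \<longrightarrow> k < length xs \<longrightarrow> \<not> P x (xs!j) (xs!k))"
  (is "?L \<longleftrightarrow> ?R")
proof
  assume ?L
  then show ?R
    unfolding triple_free_def
    by (metis Suc_less_eq length_Cons nth_Cons_0 nth_Cons_Suc zero_less_Suc)
next
  assume R: ?R
  show ?L unfolding triple_free_def
  proof (intro allI impI)
    fix i j k assume ijk: "i < j" "j < k" "k < length (x # xs)"
    then obtain j' k' where "j = Suc j'" "k = Suc k'"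
      by (metis less_nat_zero_code not0_implies_Suc)
    with R ijk show "\<not> P ((x # xs)!i) ((x # xs)!j) ((x # xs)!k)"
      unfolding triple_free_def by (cases i) auto
  qed
qed

lemma triple_free_Cons_Cons_imp:
  assumes "triple_free P (x # h # xs)" and "z \<in> set xs"
  shows "\<not> P x h z"
proof -
  obtain k where "k < length xs" "xs!k = z" using assms(2) by (metis in_set_conv_nth)
  then show ?thesis
    using assms(1)[unfolded triple_free_Cons] by (metis Suc_less_eq length_Cons nth_Cons_0 nth_Cons_Suc zero_less_Suc)
qed

lemma triple_free_map:
  assumes "\<And>p q r. p \<in> set xs \<Longrightarrow> q \<in> set xs \<Longrightarrow> r \<in> set xs \<Longrightarrow> P (f p) (f q) (f r) = P p q r"
  shows "triple_free P (map f xs) = triple_free P xs"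
  unfolding triple_free_def using assms by (auto simp: nth_mem)

lemma triple_free_Cons_twin:
  assumes free: "triple_free P (h # xs)"
    and twin: "\<And>a b. a \<in> set xs \<Longrightarrow> b \<in> set xs \<Longrightarrow> P x a b \<Longrightarrow> P h a b"
    and head: "\<And>b. b \<in> set xs \<Longrightarrow> \<not> P x h b"
  shows "triple_free P (x # h # xs)"
  unfolding triple_free_Cons[of _ x]
proof (intro conjI allI impI)
  fix j k assume jk: "j < k" "k < length (h # xs)"
  then obtain k' where k: "k = Suc k'" "k' < length xs" by (cases k) auto
  show "\<not> P x ((h # xs)!j) ((h # xs)!k)"
  proof (cases j)
    case 0 then show ?thesis using head k by simp
  next
    case (Suc j')
    then have "\<not> P h (xs!j') (xs!k')"
      using free[unfolded triple_free_Cons] jk k by simp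
    moreover have "xs!j' \<in> set xs" "xs!k' \<in> set xs" using Suc k jk by auto
    ultimately have "\<not> P x (xs!j') (xs!k')" using twin by blast
    then show ?thesis using Suc k by simp
  qed
qed (fact free)

section \<open>The ascent word\<close>

fun asc_word :: "nat list \<Rightarrow> bool list" where
  "asc_word (x # y # zs) = (x < y) # asc_word (y # zs)"
| "asc_word _ = []"

lemma length_asc_word [simp]: "length (asc_word xs) = length xs - 1"
  by (induction xs rule: asc_word.induct) auto

lemma nth_asc_word: "i + 1 < length xs \<Longrightarrow> asc_word xs ! i = (xs!i < xs!(i+1))"
  by (induction xs arbitrary: i rule: asc_word.induct) (auto simp: nth_Cons split: nat.splits)

lemma asc_word_Cons: "xs \<noteq> [] \<Longrightarrow> asc_word (x # xs) = (x < hd xs) # asc_word xs"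
  by (cases xs) auto

lemma asc_word_map:
  "(\<And>a b. a \<in> set xs \<Longrightarrow> b \<in> set xs \<Longrightarrow> f a < f b \<longleftrightarrow> a < b) \<Longrightarrow> asc_word (map f xs) = asc_word xs"
  by (induction xs rule: asc_word.induct) auto

definition true_positions :: "bool list \<Rightarrow> nat set" where
  "true_positions w = {i. i < length w \<and> w!i}"

lemma asc_set_eq_true_positions: "asc_set \<pi> = true_positions (asc_word \<pi>)"
  by (auto simp: asc_set_def true_positions_def nth_asc_word)

lemma des_set_eq_true_positions:
  assumes "distinct \<pi>"
  shows "des_set \<pi> = true_positions (map Not (asc_word \<pi>))"
proof -
  have neq: "\<pi>!i \<noteq> \<pi>!(i+1)" if "i + 1 < length \<pi>" for i
    using nth_eq_iff_index_eq[OF assms, of i "i+1"] that by simp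
  show ?thesis
  proof (rule set_eqI)
    fix i
    show "i \<in> des_set \<pi> \<longleftrightarrow> i \<in> true_positions (map Not (asc_word \<pi>))"
      using neq[of i] by (cases "i + 1 < length \<pi>") (auto simp: des_set_def true_positions_def nth_asc_word)
  qed
qed

lemma asc_word_determines:
  assumes head: "\<And>x xs y ys. R (x # xs) \<Longrightarrow> R (y # ys) \<Longrightarrow> set (x # xs) = set (y # ys) \<Longrightarrow>
      asc_word (x # xs) = asc_word (y # ys) \<Longrightarrow> x = y"
    and tl: "\<And>x xs. R (x # xs) \<Longrightarrow> R xs"
    and dist: "\<And>xs. R xs \<Longrightarrow> distinct xs"
  shows "R xs \<Longrightarrow> R ys \<Longrightarrow> set xs = set ys \<Longrightarrow> asc_word xs = asc_word ys \<Longrightarrow> xs = ys"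
proof (induction xs arbitrary: ys)
  case (Cons x xs)
  then obtain y ys' where ys: "ys = y # ys'" by (cases ys) auto
  have "x = y" using head Cons.prems ys by blast
  moreover have set_tl: "set xs = set ys'"
    using Cons.prems(3) dist[OF Cons.prems(1)] dist[OF Cons.prems(2)] ys \<open>x = y\<close> by auto
  moreover have "asc_word xs = asc_word ys'"
  proof (cases "xs = []")
    case False
    with set_tl have "ys' \<noteq> []" by auto
    with False show ?thesis using Cons.prems(4) ys \<open>x = y\<close> by (simp add: asc_word_Cons)
  qed (use set_tl in simp)
  ultimately show ?case using Cons.IH[of ys'] tl Cons.prems ys by blast
qed simp

lemma perms_length: "\<pi> \<in> perms n \<Longrightarrow> length \<pi> = n"
  unfolding perms_def using distinct_card by fastforce

lemma bij_betw_asc_word: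
  assumes unique: "\<And>xs ys. R xs \<Longrightarrow> R ys \<Longrightarrow> set xs = set ys \<Longrightarrow> asc_word xs = asc_word ys \<Longrightarrow> xs = ys"
    and dist: "\<And>xs. R xs \<Longrightarrow> distinct xs"
    and Nil: "R []"
    and realize: "\<And>w. R (f w) \<and> set (f w) = {1..length w + 1} \<and> asc_word (f w) = w"
  shows "bij_betw asc_word {\<pi> \<in> perms n. R \<pi>} {w. length w = n - 1}"
proof (rule bij_betw_imageI)
  show "inj_on asc_word {\<pi> \<in> perms n. R \<pi>}"
    by (rule inj_onI) (auto simp: perms_def intro: unique)
  show "asc_word ` {\<pi> \<in> perms n. R \<pi>} = {w. length w = n - 1}"
  proof (intro equalityI subsetI)
    fix w :: "bool list" assume "w \<in> {w. length w = n - 1}"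
    then have len: "length w = n - 1" by simp
    show "w \<in> asc_word ` {\<pi> \<in> perms n. R \<pi>}"
    proof (cases "n = 0")
      case True
      with len Nil show ?thesis by (auto simp: perms_def image_iff)
    next
      case False
      with len realize[of w] dist[of "f w"] show ?thesis by (auto simp: perms_def image_iff)
    qed
  qed (auto simp: perms_length)
qed

section \<open>Layered permutations: \<open>S\<^sub>n(231, 312)\<close>\<close>

definition layered :: "nat list \<Rightarrow> bool" where
  "layered xs \<longleftrightarrow> distinct xs \<and> triple_free pat231 xs \<and> triple_free pat312 xs"

lemma layered_tl: "layered (x # xs) \<Longrightarrow> layered xs"
  by (simp add: layered_def triple_free_Cons)

text \<open>The values below the head form the descending run that starts at the head: a smaller value
  after a larger one would give a 231, and an ascent among smaller values a 312.\<close>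

lemma layered_head_rank:
  "layered (x # xs) \<Longrightarrow> card {z \<in> set (x # xs). z < x} = length (takeWhile Not (asc_word (x # xs)))"
proof (induction xs arbitrary: x)
  case (Cons h xs)
  have free: "triple_free pat231 (x # h # xs)" "triple_free pat312 (x # h # xs)"
    and dist: "distinct (x # h # xs)" using Cons.prems by (auto simp: layered_def)
  show ?case
  proof (cases "x < h")
    case True
    have "\<not> z < x" if "z \<in> set xs" for z
      using triple_free_Cons_Cons_imp[OF free(1) that] True by (auto simp: pat231_def)
    with True show ?thesis by auto
  next
    case False
    with dist have "h < x" by auto
    have "z < x \<longleftrightarrow> z < h" if "z \<in> set xs" for z
    proof -
      have "z \<noteq> h" using dist that by auto
      then show ?thesis
        using triple_free_Cons_Cons_imp[OF free(2) that] \<open>h < x\<close> by (auto simp: pat312_def)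
    qed
    with \<open>h < x\<close> dist have "{z \<in> set (x # h # xs). z < x} = insert h {z \<in> set (h # xs). z < h}"
      by auto
    moreover have "h \<notin> {z \<in> set (h # xs). z < h}" by simp
    ultimately show ?thesis
      using Cons.IH[OF layered_tl[OF Cons.prems]] False by simp
  qed
qed simp

lemma rank_inj:
  fixes x y :: "'a :: linorder"
  assumes "finite S" "x \<in> S" "y \<in> S" "card {z \<in> S. z < x} = card {z \<in> S. z < y}"
  shows "x = y"
proof -
  have less: "card {z \<in> S. z < a} < card {z \<in> S. z < b}" if "a \<in> S" "a < b" for a b
    by (rule psubset_card_mono) (use assms(1) that in auto)
  show ?thesis
  proof (rule linorder_cases[of x y])
    assume "x < y"
    then show ?thesis using less[of x y] assms by simp
  next
    assume "x = y"
    then show ?thesis .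
  next
    assume "y < x"
    then show ?thesis using less[of y x] assms by simp
  qed
qed

lemma layered_head_determined:
  assumes lx: "layered (x # xs)" and ly: "layered (y # ys)"
    and set_eq: "set (x # xs) = set (y # ys)" and word: "asc_word (x # xs) = asc_word (y # ys)"
  shows "x = y"
proof -
  have "card {z \<in> set (x # xs). z < x} = length (takeWhile Not (asc_word (x # xs)))"
    by (rule layered_head_rank[OF lx])
  also have "\<dots> = card {z \<in> set (y # ys). z < y}"
    unfolding word by (rule layered_head_rank[OF ly, symmetric])
  finally have "card {z \<in> set (y # ys). z < x} = card {z \<in> set (y # ys). z < y}"
    unfolding set_eq .
  moreover have "x \<in> set (y # ys)" using set_eq by (metis list.set_intros(1))
  ultimately show ?thesis using rank_inj[of "set (y # ys)" x y] by simp
qed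

lemma layered_unique:
  "layered xs \<Longrightarrow> layered ys \<Longrightarrow> set xs = set ys \<Longrightarrow> asc_word xs = asc_word ys \<Longrightarrow> xs = ys"
  by (rule asc_word_determines[of layered, OF layered_head_determined layered_tl]) (auto simp: layered_def)

text \<open>Prepending a descent puts \<open>y + 1\<close> in front of the old head \<open>y\<close>, after shifting the values
  above \<open>y\<close> up to make room; the new head is then a twin of \<open>y\<close> for both patterns.\<close>

fun layered_of_word :: "bool list \<Rightarrow> nat list" where
  "layered_of_word [] = [1]"
| "layered_of_word (True # w) = 1 # map Suc (layered_of_word w)"
| "layered_of_word (False # w) =
     (let y = hd (layered_of_word w)
      in Suc y # map (\<lambda>v. if y < v then Suc v else v) (layered_of_word w))"

lemma layered_of_word_not_Nil: "layered_of_word w \<noteq> []"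
  by (cases w rule: layered_of_word.cases) (auto simp: Let_def)

lemma insert_image_shift_above:
  assumes "y \<in> {1..m}"
  shows "insert (Suc y) ((\<lambda>v. if y < v then Suc v else v) ` {1..m}) = {1..Suc m}"
proof (intro equalityI subsetI)
  fix v assume v: "v \<in> {1..Suc m}"
  consider "v = Suc y" | "v \<le> y" | "Suc y < v" by linarith
  then show "v \<in> insert (Suc y) ((\<lambda>v. if y < v then Suc v else v) ` {1..m})"
  proof cases
    case 2 then show ?thesis using v assms by (auto intro!: image_eqI[of v _ v])
  next
    case 3 then show ?thesis using v by (auto intro!: image_eqI[of v _ "v - 1"])
  qed simp
qed (use assms in auto)

lemma layered_of_word:
  "layered (layered_of_word w) \<and> set (layered_of_word w) = {1..length w + 1} \<and>
   asc_word (layered_of_word w) = w"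
proof (induction w rule: layered_of_word.induct)
  case 1 then show ?case by (simp add: layered_def triple_free_def)
next
  case (2 w)
  let ?ys = "layered_of_word w"
  have "hd ?ys \<in> set ?ys" using layered_of_word_not_Nil by simp
  moreover have "triple_free P (map Suc ?ys) = triple_free P ?ys"
    if "P \<in> {pat231, pat312}" for P
    by (rule triple_free_map) (use that in \<open>auto simp: pat231_def pat312_def\<close>)
  moreover have "set (1 # map Suc ?ys) = {1..length w + 2}"
    using 2 by (auto simp: image_iff)
  ultimately show ?case using 2 layered_of_word_not_Nil
    by (auto simp: layered_def triple_free_Cons asc_word_Cons asc_word_map hd_map distinct_map
        pat231_def pat312_def)
next
  case (3 w)
  obtain y ys where ys: "layered_of_word w = y # ys"
    by (metis layered_of_word_not_Nil list.exhaust)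
  define shift where "shift = (\<lambda>v. if y < v then Suc v else v)"
  have result: "layered_of_word (False # w) = Suc y # y # map shift ys"
    using ys by (simp add: shift_def)
  have IH: "layered (y # ys)" "set (y # ys) = {1..length w + 1}" "asc_word (y # ys) = w"
    using 3 ys by auto
  have mono: "strict_mono shift" by (auto simp: strict_mono_def shift_def)
  have shift_y: "shift y = y" by (simp add: shift_def)
  have ys_ne: "Suc y \<notin> shift ` set ys" "y \<notin> shift ` set ys"
    using IH(1) by (auto simp: shift_def layered_def)
  have free: "triple_free P (y # map shift ys)" if "P \<in> {pat231, pat312}" "triple_free P (y # ys)" for P
    using triple_free_map[of "y # ys" P shift] that mono shift_y
    by (auto simp: pat231_def pat312_def strict_mono_less)
  have "triple_free P (Suc y # y # map shift ys)" if "P \<in> {pat231, pat312}" "triple_free P (y # ys)" for P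
    by (rule triple_free_Cons_twin[OF free[OF that]])
      (use that ys_ne in \<open>auto simp: pat231_def pat312_def less_Suc_eq\<close>)
  moreover have "distinct (Suc y # y # map shift ys)"
    using IH(1) ys_ne mono by (auto simp: layered_def distinct_map strict_mono_imp_inj_on inj_on_subset)
  moreover have "set (Suc y # y # map shift ys) = {1..length w + 2}"
  proof -
    have "set (Suc y # y # map shift ys) = insert (Suc y) (shift ` set (y # ys))"
      using shift_y by simp
    also have "\<dots> = {1..Suc (length w + 1)}"
      unfolding IH(2) shift_def by (rule insert_image_shift_above) (metis IH(2) list.set_intros(1))
    finally show ?thesis by simp
  qed
  moreover have "asc_word (Suc y # y # map shift ys) = False # w"
    using IH(3) asc_word_map[of "y # ys" shift] mono shift_y by (simp add: strict_mono_less)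
  ultimately show ?case using IH(1) unfolding result by (simp add: layered_def)
qed

lemma Av2_231_312_eq_layered: "Av2 n [2,3,1] [3,1,2] = {\<pi> \<in> perms n. layered \<pi>}"
  unfolding Av2_def avoids_231 avoids_312 layered_def by (auto simp: perms_def)

lemma bij_betw_asc_word_Av2_231_312: "bij_betw asc_word (Av2 n [2,3,1] [3,1,2]) {w. length w = n - 1}"
  unfolding Av2_231_312_eq_layered
  by (rule bij_betw_asc_word[OF layered_unique _ _ layered_of_word]) (auto simp: layered_def)

section \<open>Suffix-extremal permutations: \<open>S\<^sub>n(213, 231)\<close>\<close>

definition suffix_extremal :: "nat list \<Rightarrow> bool" where
  "suffix_extremal xs \<longleftrightarrow> distinct xs \<and> triple_free pat213 xs \<and> triple_free pat231 xs"

lemma suffix_extremal_head: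
  assumes "suffix_extremal (x # h # xs)" and "z \<in> set (h # xs)"
  shows "x < h \<longleftrightarrow> x < z"
proof -
  have "distinct (x # h # xs)" "triple_free pat213 (x # h # xs)" "triple_free pat231 (x # h # xs)"
    using assms(1) by (auto simp: suffix_extremal_def)
  moreover have "z \<noteq> x" using assms calculation(1) by auto
  ultimately show ?thesis
    using assms(2) triple_free_Cons_Cons_imp[of pat213 x h xs z] triple_free_Cons_Cons_imp[of pat231 x h xs z]
    by (auto simp: pat213_def pat231_def)
qed

lemma suffix_extremal_head_determined:
  assumes ext: "suffix_extremal (x # xs)" "suffix_extremal (y # ys)"
    and set_eq: "set (x # xs) = set (y # ys)" and word: "asc_word (x # xs) = asc_word (y # ys)"
  shows "x = y"
proof (rule ccontr)
  assume "x \<noteq> y"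
  with set_eq have "y \<in> set xs" "x \<in> set ys" by auto
  then obtain h xs' k ys' where "xs = h # xs'" "ys = k # ys'"
    by (metis list.exhaust list.set_cases)
  with ext word \<open>y \<in> set xs\<close> \<open>x \<in> set ys\<close> \<open>x \<noteq> y\<close> show False
    using suffix_extremal_head[of x h xs' y] suffix_extremal_head[of y k ys' x] by auto
qed

lemma suffix_extremal_tl: "suffix_extremal (x # xs) \<Longrightarrow> suffix_extremal xs"
  by (simp add: suffix_extremal_def triple_free_Cons)

lemma suffix_extremal_unique:
  "suffix_extremal xs \<Longrightarrow> suffix_extremal ys \<Longrightarrow> set xs = set ys \<Longrightarrow> asc_word xs = asc_word ys \<Longrightarrow> xs = ys"
  by (rule asc_word_determines[of suffix_extremal, OF suffix_extremal_head_determined suffix_extremal_tl])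
    (auto simp: suffix_extremal_def)

fun extremal_of_word :: "bool list \<Rightarrow> nat list" where
  "extremal_of_word [] = [1]"
| "extremal_of_word (True # w) = 1 # map Suc (extremal_of_word w)"
| "extremal_of_word (False # w) = (length w + 2) # extremal_of_word w"

lemma set_extremal_of_word: "set (extremal_of_word w) = {1..length w + 1}"
proof (induction w rule: extremal_of_word.induct)
  case (2 w)
  then show ?case by (auto simp: image_iff)
qed auto

lemma extremal_of_word:
  "suffix_extremal (extremal_of_word w) \<and> asc_word (extremal_of_word w) = w"
proof (induction w rule: extremal_of_word.induct)
  case 1 then show ?case by (simp add: suffix_extremal_def triple_free_def)
next
  case (2 w)
  let ?ys = "extremal_of_word w"
  have "?ys \<noteq> []" using set_extremal_of_word[of w] by auto
  moreover have "hd ?ys \<in> set ?ys" using calculation by simp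
  moreover have "triple_free P (map Suc ?ys) = triple_free P ?ys"
    if "P \<in> {pat213, pat231}" for P
    by (rule triple_free_map) (use that in \<open>auto simp: pat213_def pat231_def\<close>)
  ultimately show ?case using 2
    by (auto simp: suffix_extremal_def triple_free_Cons asc_word_Cons asc_word_map hd_map
        distinct_map set_extremal_of_word pat213_def pat231_def)
next
  case (3 w)
  let ?ys = "extremal_of_word w" and ?m = "length w + 2"
  have above: "v < ?m" if "v \<in> set ?ys" for v
    using that set_extremal_of_word[of w] by auto
  have no_pattern: "\<not> P ?m a b" if "P \<in> {pat213, pat231}" "a \<in> set ?ys" "b \<in> set ?ys" for P a b
    using that above[of a] above[of b] by (auto simp: pat213_def pat231_def)
  have "triple_free P (?m # ?ys)" if "P \<in> {pat213, pat231}" "triple_free P ?ys" for P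
    unfolding triple_free_Cons using that no_pattern[OF that(1) nth_mem nth_mem] by auto
  moreover have ne: "?ys \<noteq> []" using set_extremal_of_word[of w] by auto
  moreover have "\<not> ?m < hd ?ys" using ne above by (meson hd_in_set not_less_iff_gr_or_eq)
  ultimately show ?case using 3 above
    by (auto simp: suffix_extremal_def asc_word_Cons)
qed

lemma Av2_213_231_eq_suffix_extremal: "Av2 n [2,1,3] [2,3,1] = {\<sigma> \<in> perms n. suffix_extremal \<sigma>}"
  unfolding Av2_def avoids_213 avoids_231 suffix_extremal_def by (auto simp: perms_def)

lemma bij_betw_asc_word_Av2_213_231: "bij_betw asc_word (Av2 n [2,1,3] [2,3,1]) {w. length w = n - 1}"
  unfolding Av2_213_231_eq_suffix_extremal using extremal_of_word set_extremal_of_word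
  by (intro bij_betw_asc_word[OF suffix_extremal_unique, where f = extremal_of_word])
    (auto simp: suffix_extremal_def)

section \<open>Statistics read off the ascent word\<close>

definition max_nonadjacent :: "nat set \<Rightarrow> nat" where
  "max_nonadjacent S = Max (card ` {I. I \<subseteq> S \<and> nonadjacent I})"

definition word_weight :: "'a :: comm_semiring_1 \<Rightarrow> 'a \<Rightarrow> 'a \<Rightarrow> 'a \<Rightarrow> bool list \<Rightarrow> 'a" where
  "word_weight t1 t2 t3 t4 w =
     t1 ^ card (true_positions w) * t2 ^ card (true_positions (map Not w)) *
     t3 ^ max_nonadjacent (true_positions w) * t4 ^ max_nonadjacent (true_positions (map Not w))"

lemma word_weight_asc_word:
  assumes "distinct \<pi>"
  shows "word_weight t1 t2 t3 t4 (asc_word \<pi>) = t1 ^ asc \<pi> * t2 ^ des \<pi> * t3 ^ MNA \<pi> * t4 ^ MND \<pi>"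
  unfolding word_weight_def asc_def des_def MNA_def MND_def max_nonadjacent_def
    asc_set_eq_true_positions des_set_eq_true_positions[OF assms] ..

lemma word_weight_Not_asc_word:
  assumes "distinct \<pi>"
  shows "word_weight t1 t2 t3 t4 (map Not (asc_word \<pi>)) = t1 ^ des \<pi> * t2 ^ asc \<pi> * t3 ^ MND \<pi> * t4 ^ MNA \<pi>"
  using word_weight_asc_word[OF assms, of t2 t1 t4 t3]
  by (simp add: word_weight_def comp_def mult_ac)

theorem theorem15:
  fixes n :: nat and t1 t2 t3 t4 :: "'a :: comm_semiring_1"
  shows "(\<Sum>\<pi>\<in>Av2 n [2,3,1] [3,1,2]. t1 ^ asc \<pi> * t2 ^ des \<pi> * t3 ^ MNA \<pi> * t4 ^ MND \<pi>)
       = (\<Sum>\<sigma>\<in>Av2 n [2,1,3] [2,3,1]. t1 ^ des \<sigma> * t2 ^ asc \<sigma> * t3 ^ MND \<sigma> * t4 ^ MNA \<sigma>)"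
proof -
  let ?W = "word_weight t1 t2 t3 t4" and ?words = "{w :: bool list. length w = n - 1}"
  have bij_Not: "bij_betw (map Not) ?words ?words"
    by (rule bij_betw_byWitness[of _ "map Not"]) (auto simp: comp_def)
  have "(\<Sum>\<pi>\<in>Av2 n [2,3,1] [3,1,2]. t1 ^ asc \<pi> * t2 ^ des \<pi> * t3 ^ MNA \<pi> * t4 ^ MND \<pi>)
      = (\<Sum>\<pi>\<in>Av2 n [2,3,1] [3,1,2]. ?W (asc_word \<pi>))"
    by (intro sum.cong refl word_weight_asc_word[symmetric]) (simp add: Av2_def perms_def)
  also have "\<dots> = sum ?W ?words" by (rule sum.reindex_bij_betw[OF bij_betw_asc_word_Av2_231_312])
  also have "\<dots> = (\<Sum>w\<in>?words. ?W (map Not w))" by (rule sum.reindex_bij_betw[OF bij_Not, symmetric])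
  also have "\<dots> = (\<Sum>\<sigma>\<in>Av2 n [2,1,3] [2,3,1]. ?W (map Not (asc_word \<sigma>)))"
    by (rule sum.reindex_bij_betw[OF bij_betw_asc_word_Av2_213_231, of "\<lambda>w. ?W (map Not w)", symmetric])
  also have "\<dots> = (\<Sum>\<sigma>\<in>Av2 n [2,1,3] [2,3,1]. t1 ^ des \<sigma> * t2 ^ asc \<sigma> * t3 ^ MND \<sigma> * t4 ^ MNA \<sigma>)"
    by (intro sum.cong refl word_weight_Not_asc_word) (simp add: Av2_def perms_def)
  finally show ?thesis .
qed

end
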